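(* Fix a UL-chain $\mathbf{A}$ and a predicate language $\mathcal{P}$, and let $\mathscr{K}$ be a countable class of finitely generated $\mathbf{A}$-structures for $\mathcal{P}$ (classes being considered up to isomorphism). Then $\mathscr{K}=\mathrm{Age}(\mathbf{A},\mathbf{N})$ for some $\mathbf{A}$-structure $\langle \mathbf{A},\mathbf{N}\rangle$ if and only if $\mathscr{K}$ satisfies the hereditary property (HP) and the joint embedding property (JEP). Furthermore, if $\mathscr{K}$ is a class of $\mathbf{A}$-structures for $\mathcal{P}$ of arbitrary cardinality which satisfies HP and JEP and is closed under unions of chains, then $\mathscr{K}=\mathrm{Age}(\mathbf{A},\mathbf{N})$ for some $\mathbf{A}$-structure $\langle\mathbf{A},\mathbf{N}\rangle$.
   Context: A UL-algebra is a structure $\mathbf{A}=\langle A,\wedge,\vee,\&,\to,\bar 0,\bar 1,\bot,\top\rangle$ such that $\langle A,\wedge,\vee,\bot,\top\rangle$ is a bounded lattice, $\langle A,\&,\bar 1\rangle$ is a commutative monoid, $a\& b\le c$ iff $b\le a\to c$ for all $a,b,c$, and $((a\to b)\wedge\bar 1)\vee((b\to a)\wedge \bar 1)=\bar 1$ for all $a,b$. A UL-chain is a UL-algebra whose lattice order is linear. A predicate language $\mathcal{P}$ consists of predicate symbols and function symbols, each with an arity. An $\mathbf{A}$-structure $\langle\mathbf{A},\mathbf{M}\rangle$ consists of a set $M$, a function $P_{\mathbf{M}}:M^n\to A$ for each $n$-ary predicate symbol $P$, and a function $F_{\mathbf{M}}:M^n\to M$ for each $n$-ary function symbol $F$. Terms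 are evaluated as usual; the truth value of an atomic formula $P(t_1,\dots,t_n)$ is $P_{\mathbf{M}}$ applied to the values of the terms, and quantifier-free formulas (built with the connectives $\wedge,\vee,\&,\to,\bar0,\bar1,\bot,\top$) are evaluated by the corresponding operations of $\mathbf{A}$; $\|\varphi(\vec d)\|^{\mathbf{A}}_{\mathbf{M}}$ denotes this value. $\langle\mathbf{A},\mathbf{M}\rangle$ is a substructure of $\langle\mathbf{A},\mathbf{N}\rangle$ if $M\subseteq N$, $F_{\mathbf{M}}=F_{\mathbf{N}}$ on tuples from $M$ for every function symbol, and every quantifier-free formula has the same value in both structures on every tuple from $M$. An embedding $\langle Id,f\rangle$ of $\langle\mathbf{A},\mathbf{M}\rangle$ into $\langle\mathbf{A},\mathbf{N}\rangle$ is an injective map $f:M\to N$ commuting with all function symbols and preserving the value of every quantifier-free formula (the map on $\mathbf{A}$ is the identity); an isomorphism is a surjective embedding. A structure is finitely generated if its universe is generated by a finite subset under the function symbols. A chain is a sequence of structures each a substructure of the later ones; its union has as universe the union of the universes with the relations and functions inherited. The age $\mathrm{Age}(\mathbf{A},\mathbf{N})$ is the class of all finitely generated substructures of $\langle\mathbf{A},\mathbf{N}\rangle$ and their isomorphic copies (taken up to isomorphism). $\mathscr{K}$ has HP if it is closed under taking substructures; it has JEP if any two members of $\mathscr{K}$ both embed into some common member of $\mathscr{K}$. *)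

theory Defs
  imports Main "HOL-Library.Countable_Set"
begin

record 'a ul_alg =
  carrier :: "'a set"
  meet :: "'a \<Rightarrow> 'a \<Rightarrow> 'a"
  join :: "'a \<Rightarrow> 'a \<Rightarrow> 'a"
  fus  :: "'a \<Rightarrow> 'a \<Rightarrow> 'a"
  imp  :: "'a \<Rightarrow> 'a \<Rightarrow> 'a"
  azero :: 'a
  aone :: 'a
  abot :: 'a
  atop :: 'a

definition ale :: "'a ul_alg \<Rightarrow> 'a \<Rightarrow> 'a \<Rightarrow> bool" where
  "ale A x y \<longleftrightarrow> meet A x y = x"

definition ul_algebra :: "'a ul_alg \<Rightarrow> bool" where
  "ul_algebra A \<longleftrightarrow>
     (\<forall>x\<in>carrier A. \<forall>y\<in>carrier A.
        meet A x y \<in> carrier A \<and> join A x y \<in> carrier A \<and>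
        fus A x y \<in> carrier A \<and> imp A x y \<in> carrier A) \<and>
     azero A \<in> carrier A \<and> aone A \<in> carrier A \<and> abot A \<in> carrier A \<and> atop A \<in> carrier A \<and>
     \<comment> \<open>bounded lattice\<close>
     (\<forall>x\<in>carrier A. \<forall>y\<in>carrier A.
        meet A x y = meet A y x \<and> join A x y = join A y x \<and>
        meet A x (join A x y) = x \<and> join A x (meet A x y) = x) \<and>
     (\<forall>x\<in>carrier A. \<forall>y\<in>carrier A. \<forall>z\<in>carrier A.
        meet A (meet A x y) z = meet A x (meet A y z) \<and>
        join A (join A x y) z = join A x (join A y z)) \<and>
     (\<forall>x\<in>carrier A. meet A x (abot A) = abot A \<and> join A x (atop A) = atop A) \<and>
     \<comment> \<open>commutative monoid\<close>
     (\<forall>x\<in>carrier A. \<forall>y\<in>carrier A. fus A x y = fus A y x) \<and>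
     (\<forall>x\<in>carrier A. \<forall>y\<in>carrier A. \<forall>z\<in>carrier A.
        fus A (fus A x y) z = fus A x (fus A y z)) \<and>
     (\<forall>x\<in>carrier A. fus A x (aone A) = x) \<and>
     \<comment> \<open>residuation\<close>
     (\<forall>a\<in>carrier A. \<forall>b\<in>carrier A. \<forall>c\<in>carrier A.
        ale A (fus A a b) c \<longleftrightarrow> ale A b (imp A a c)) \<and>
     \<comment> \<open>prelinearity\<close>
     (\<forall>a\<in>carrier A. \<forall>b\<in>carrier A.
        join A (meet A (imp A a b) (aone A)) (meet A (imp A b a) (aone A)) = aone A)"

definition ul_chain :: "'a ul_alg \<Rightarrow> bool" where
  "ul_chain A \<longleftrightarrow> ul_algebra A \<and>
     (\<forall>x\<in>carrier A. \<forall>y\<in>carrier A. ale A x y \<or> ale A y x)"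

text \<open>A predicate language is given by the types 'p (predicate symbols) and
  'f (function symbols) with arity functions arp and arf.\<close>

datatype 'f tm = Var nat | Fn 'f "'f tm list"

datatype ('p, 'f) qf =
    Atom 'p "'f tm list"
  | Conj "('p, 'f) qf" "('p, 'f) qf"
  | Disj "('p, 'f) qf" "('p, 'f) qf"
  | Fus "('p, 'f) qf" "('p, 'f) qf"
  | Imp "('p, 'f) qf" "('p, 'f) qf"
  | Zero | One | Bot | Top

fun wf_tm :: "('f \<Rightarrow> nat) \<Rightarrow> 'f tm \<Rightarrow> bool" where
  "wf_tm arf (Var i) = True"
| "wf_tm arf (Fn f ts) = (length ts = arf f \<and> (\<forall>t\<in>set ts. wf_tm arf t))"

fun wf_qf :: "('p \<Rightarrow> nat) \<Rightarrow> ('f \<Rightarrow> nat) \<Rightarrow> ('p, 'f) qf \<Rightarrow> bool" where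
  "wf_qf arp arf (Atom p ts) = (length ts = arp p \<and> (\<forall>t\<in>set ts. wf_tm arf t))"
| "wf_qf arp arf (Conj a b) = (wf_qf arp arf a \<and> wf_qf arp arf b)"
| "wf_qf arp arf (Disj a b) = (wf_qf arp arf a \<and> wf_qf arp arf b)"
| "wf_qf arp arf (Fus a b) = (wf_qf arp arf a \<and> wf_qf arp arf b)"
| "wf_qf arp arf (Imp a b) = (wf_qf arp arf a \<and> wf_qf arp arf b)"
| "wf_qf arp arf Zero = True"
| "wf_qf arp arf One = True"
| "wf_qf arp arf Bot = True"
| "wf_qf arp arf Top = True"

record ('m, 'p, 'f, 'a) struct =
  univ :: "'m set"
  preds :: "'p \<Rightarrow> 'm list \<Rightarrow> 'a"
  funs :: "'f \<Rightarrow> 'm list \<Rightarrow> 'm"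

definition a_structure ::
  "'a ul_alg \<Rightarrow> ('p \<Rightarrow> nat) \<Rightarrow> ('f \<Rightarrow> nat) \<Rightarrow> ('m, 'p, 'f, 'a) struct \<Rightarrow> bool" where
  "a_structure A arp arf M \<longleftrightarrow>
     (\<forall>p xs. length xs = arp p \<and> set xs \<subseteq> univ M \<longrightarrow> preds M p xs \<in> carrier A) \<and>
     (\<forall>f xs. length xs = arf f \<and> set xs \<subseteq> univ M \<longrightarrow> funs M f xs \<in> univ M)"

fun eval_tm :: "('m, 'p, 'f, 'a) struct \<Rightarrow> (nat \<Rightarrow> 'm) \<Rightarrow> 'f tm \<Rightarrow> 'm" where
  "eval_tm M e (Var i) = e i"
| "eval_tm M e (Fn f ts) = funs M f (map (eval_tm M e) ts)"

fun eval_qf :: "'a ul_alg \<Rightarrow> ('m, 'p, 'f, 'a) struct \<Rightarrow> (nat \<Rightarrow> 'm) \<Rightarrow> ('p, 'f) qf \<Rightarrow> 'a" where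
  "eval_qf A M e (Atom p ts) = preds M p (map (eval_tm M e) ts)"
| "eval_qf A M e (Conj a b) = meet A (eval_qf A M e a) (eval_qf A M e b)"
| "eval_qf A M e (Disj a b) = join A (eval_qf A M e a) (eval_qf A M e b)"
| "eval_qf A M e (Fus a b) = fus A (eval_qf A M e a) (eval_qf A M e b)"
| "eval_qf A M e (Imp a b) = imp A (eval_qf A M e a) (eval_qf A M e b)"
| "eval_qf A M e Zero = azero A"
| "eval_qf A M e One = aone A"
| "eval_qf A M e Bot = abot A"
| "eval_qf A M e Top = atop A"

definition substructure ::
  "'a ul_alg \<Rightarrow> ('p \<Rightarrow> nat) \<Rightarrow> ('f \<Rightarrow> nat) \<Rightarrow> ('m, 'p, 'f, 'a) struct \<Rightarrow> ('m, 'p, 'f, 'a) struct \<Rightarrow> bool" where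
  "substructure A arp arf M N \<longleftrightarrow>
     a_structure A arp arf M \<and> a_structure A arp arf N \<and>
     univ M \<subseteq> univ N \<and>
     (\<forall>f xs. length xs = arf f \<and> set xs \<subseteq> univ M \<longrightarrow> funs M f xs = funs N f xs) \<and>
     (\<forall>\<phi> e. wf_qf arp arf \<phi> \<and> range e \<subseteq> univ M \<longrightarrow> eval_qf A M e \<phi> = eval_qf A N e \<phi>)"

definition embedding ::
  "'a ul_alg \<Rightarrow> ('p \<Rightarrow> nat) \<Rightarrow> ('f \<Rightarrow> nat) \<Rightarrow> ('m \<Rightarrow> 'n) \<Rightarrow>
   ('m, 'p, 'f, 'a) struct \<Rightarrow> ('n, 'p, 'f, 'a) struct \<Rightarrow> bool" where
  "embedding A arp arf h M N \<longleftrightarrow>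
     a_structure A arp arf M \<and> a_structure A arp arf N \<and>
     inj_on h (univ M) \<and> h ` univ M \<subseteq> univ N \<and>
     (\<forall>f xs. length xs = arf f \<and> set xs \<subseteq> univ M \<longrightarrow> h (funs M f xs) = funs N f (map h xs)) \<and>
     (\<forall>\<phi> e. wf_qf arp arf \<phi> \<and> range e \<subseteq> univ M \<longrightarrow> eval_qf A N (h \<circ> e) \<phi> = eval_qf A M e \<phi>)"

definition isomorphic ::
  "'a ul_alg \<Rightarrow> ('p \<Rightarrow> nat) \<Rightarrow> ('f \<Rightarrow> nat) \<Rightarrow>
   ('m, 'p, 'f, 'a) struct \<Rightarrow> ('n, 'p, 'f, 'a) struct \<Rightarrow> bool" where
  "isomorphic A arp arf M N \<longleftrightarrow>
     (\<exists>h. embedding A arp arf h M N \<and> h ` univ M = univ N)"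

inductive_set generated :: "('f \<Rightarrow> nat) \<Rightarrow> ('m, 'p, 'f, 'a) struct \<Rightarrow> 'm set \<Rightarrow> 'm set"
  for arf M X where
  gen_base: "x \<in> X \<Longrightarrow> x \<in> generated arf M X"
| gen_fun: "length xs = arf f \<Longrightarrow> (\<forall>x\<in>set xs. x \<in> generated arf M X) \<Longrightarrow> funs M f xs \<in> generated arf M X"

definition fin_gen :: "('f \<Rightarrow> nat) \<Rightarrow> ('m, 'p, 'f, 'a) struct \<Rightarrow> bool" where
  "fin_gen arf M \<longleftrightarrow> (\<exists>X. finite X \<and> X \<subseteq> univ M \<and> univ M = generated arf M X)"

definition age ::
  "'a ul_alg \<Rightarrow> ('p \<Rightarrow> nat) \<Rightarrow> ('f \<Rightarrow> nat) \<Rightarrow> ('n, 'p, 'f, 'a) struct \<Rightarrow> ('n, 'p, 'f, 'a) struct set" where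
  "age A arp arf N = {C. fin_gen arf C \<and> substructure A arp arf C N}"

definition eq_upto_iso ::
  "'a ul_alg \<Rightarrow> ('p \<Rightarrow> nat) \<Rightarrow> ('f \<Rightarrow> nat) \<Rightarrow>
   ('m, 'p, 'f, 'a) struct set \<Rightarrow> ('n, 'p, 'f, 'a) struct set \<Rightarrow> bool" where
  "eq_upto_iso A arp arf K L \<longleftrightarrow>
     (\<forall>B\<in>K. \<exists>C\<in>L. isomorphic A arp arf B C) \<and>
     (\<forall>C\<in>L. \<exists>B\<in>K. isomorphic A arp arf C B)"

definition countable_upto_iso ::
  "'a ul_alg \<Rightarrow> ('p \<Rightarrow> nat) \<Rightarrow> ('f \<Rightarrow> nat) \<Rightarrow> ('m, 'p, 'f, 'a) struct set \<Rightarrow> bool" where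
  "countable_upto_iso A arp arf K \<longleftrightarrow>
     (\<exists>K0 \<subseteq> K. countable K0 \<and> (\<forall>B\<in>K. \<exists>B0\<in>K0. isomorphic A arp arf B B0))"

definition HP ::
  "'a ul_alg \<Rightarrow> ('p \<Rightarrow> nat) \<Rightarrow> ('f \<Rightarrow> nat) \<Rightarrow> ('m, 'p, 'f, 'a) struct set \<Rightarrow> bool" where
  "HP A arp arf K \<longleftrightarrow>
     (\<forall>B\<in>K. \<forall>C. fin_gen arf C \<and> substructure A arp arf C B \<longrightarrow>
        (\<exists>B'\<in>K. isomorphic A arp arf C B'))"

definition JEP ::
  "'a ul_alg \<Rightarrow> ('p \<Rightarrow> nat) \<Rightarrow> ('f \<Rightarrow> nat) \<Rightarrow> ('m, 'p, 'f, 'a) struct set \<Rightarrow> bool" where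
  "JEP A arp arf K \<longleftrightarrow>
     (\<forall>B1\<in>K. \<forall>B2\<in>K. \<exists>D\<in>K. \<exists>h1 h2.
        embedding A arp arf h1 B1 D \<and> embedding A arp arf h2 B2 D)"

definition is_chain ::
  "'a ul_alg \<Rightarrow> ('p \<Rightarrow> nat) \<Rightarrow> ('f \<Rightarrow> nat) \<Rightarrow> ('m, 'p, 'f, 'a) struct set \<Rightarrow> bool" where
  "is_chain A arp arf C \<longleftrightarrow>
     (\<forall>B1\<in>C. \<forall>B2\<in>C. substructure A arp arf B1 B2 \<or> substructure A arp arf B2 B1)"

definition union_chain :: "('m, 'p, 'f, 'a) struct set \<Rightarrow> ('m, 'p, 'f, 'a) struct" where
  "union_chain C =
     \<lparr> univ = (\<Union>B\<in>C. univ B),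
       preds = (\<lambda>p xs. SOME v. \<exists>B\<in>C. set xs \<subseteq> univ B \<and> v = preds B p xs),
       funs = (\<lambda>f xs. SOME y. \<exists>B\<in>C. set xs \<subseteq> univ B \<and> y = funs B f xs) \<rparr>"

definition closed_under_chains ::
  "'a ul_alg \<Rightarrow> ('p \<Rightarrow> nat) \<Rightarrow> ('f \<Rightarrow> nat) \<Rightarrow> ('m, 'p, 'f, 'a) struct set \<Rightarrow> bool" where
  "closed_under_chains A arp arf K \<longleftrightarrow>
     (\<forall>C :: ('m, 'p, 'f, 'a) struct set. C \<noteq> {} \<and> is_chain A arp arf C \<and> (\<forall>B\<in>C. \<exists>B'\<in>K. isomorphic A arp arf B B') \<longrightarrow>
        (\<exists>B'\<in>K. isomorphic A arp arf (union_chain C) B'))"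

end

theory Submission
  imports Defs
begin

(* Both constructions build N on the carrier type 'm \<times> nat as the union of an \<omega>-chain of isomorphic
   copies of members of K, where the elements added at stage n carry the tag n, so that fresh
   elements are available whenever a stage is extended along an embedding.  For countable K,
   JEP lets stage n + 1 also absorb the (n + 1)-st member of an enumeration of K, so every
   member of K embeds into the union; a finitely generated substructure of the union lies in a
   single stage, and HP puts it back into K.  With closure under unions of chains instead,
   K has a member into which every member of K embeds: otherwise JEP yields a chain in which
   no stage embeds into its predecessor, and its union would be isomorphic to a finitely
   generated member of K although its generators, hence all of it, lie in one stage.
   Conversely, an age has HP trivially and JEP because two finitely generated substructures
   lie in the one generated by the union of their generators. *)

lemma a_structureD:
  assumes "a_structure A arp arf M"
  shows "length xs = arp p \<Longrightarrow> set xs \<subseteq> univ M \<Longrightarrow> preds M p xs \<in> carrier A"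
    and "length xs = arf f \<Longrightarrow> set xs \<subseteq> univ M \<Longrightarrow> funs M f xs \<in> univ M"
  using assms unfolding a_structure_def by blast+

lemma embeddingI:
  assumes "a_structure A arp arf M" "a_structure A arp arf N"
    and "inj_on h (univ M)" "h ` univ M \<subseteq> univ N"
    and "\<And>f xs. length xs = arf f \<Longrightarrow> set xs \<subseteq> univ M \<Longrightarrow> h (funs M f xs) = funs N f (map h xs)"
    and "\<And>\<phi> e. wf_qf arp arf \<phi> \<Longrightarrow> range e \<subseteq> univ M \<Longrightarrow> eval_qf A N (h \<circ> e) \<phi> = eval_qf A M e \<phi>"
  shows "embedding A arp arf h M N"
  using assms unfolding embedding_def by blast

lemma embeddingD:
  assumes "embedding A arp arf h M N"
  shows embedding_a_structure: "a_structure A arp arf M" "a_structure A arp arf N"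
    and embedding_inj_on: "inj_on h (univ M)"
    and embedding_image_subset: "h ` univ M \<subseteq> univ N"
    and embedding_funs:
      "length xs = arf f \<Longrightarrow> set xs \<subseteq> univ M \<Longrightarrow> h (funs M f xs) = funs N f (map h xs)"
    and embedding_eval_qf:
      "wf_qf arp arf \<phi> \<Longrightarrow> range e \<subseteq> univ M \<Longrightarrow> eval_qf A N (h \<circ> e) \<phi> = eval_qf A M e \<phi>"
  using assms unfolding embedding_def by blast+

lemma substructureD:
  assumes "substructure A arp arf M N"
  shows substructure_a_structure: "a_structure A arp arf M" "a_structure A arp arf N"
    and substructure_univ: "univ M \<subseteq> univ N"
    and substructure_funs: "length xs = arf f \<Longrightarrow> set xs \<subseteq> univ M \<Longrightarrow> funs M f xs = funs N f xs"
    and substructure_eval_qf: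
      "wf_qf arp arf \<phi> \<Longrightarrow> range e \<subseteq> univ M \<Longrightarrow> eval_qf A M e \<phi> = eval_qf A N e \<phi>"
  using assms unfolding substructure_def by blast+

lemma substructure_iff_embedding_id:
  "substructure A arp arf M N \<longleftrightarrow> embedding A arp arf id M N"
  unfolding substructure_def embedding_def by auto

lemma embedding_comp:
  assumes h: "embedding A arp arf h M N" and k: "embedding A arp arf k N P"
  shows "embedding A arp arf (k \<circ> h) M P"
proof (rule embeddingI)
  have hM: "h ` univ M \<subseteq> univ N" by (rule embedding_image_subset[OF h])
  show "a_structure A arp arf M" "a_structure A arp arf P"
    using embedding_a_structure[OF h] embedding_a_structure[OF k] by auto
  show "inj_on (k \<circ> h) (univ M)"
    using embedding_inj_on[OF h] embedding_inj_on[OF k] hM by (blast intro: comp_inj_on inj_on_subset)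
  show "(k \<circ> h) ` univ M \<subseteq> univ P"
    using hM embedding_image_subset[OF k] by auto
  show "(k \<circ> h) (funs M f xs) = funs P f (map (k \<circ> h) xs)"
    if "length xs = arf f" "set xs \<subseteq> univ M" for f xs
    using that hM embedding_funs[OF h that] embedding_funs[OF k, of "map h xs" f] by auto
  show "eval_qf A P ((k \<circ> h) \<circ> e) \<phi> = eval_qf A M e \<phi>"
    if "wf_qf arp arf \<phi>" "range e \<subseteq> univ M" for \<phi> e
    using that hM embedding_eval_qf[OF h that] embedding_eval_qf[OF k that(1), of "h \<circ> e"]
    by (auto simp: comp_assoc image_comp[symmetric])
qed

lemma embedding_cong:
  assumes h: "embedding A arp arf h M N" and eq: "\<And>x. x \<in> univ M \<Longrightarrow> h' x = h x"
  shows "embedding A arp arf h' M N"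
proof (rule embeddingI)
  show "a_structure A arp arf M" "a_structure A arp arf N"
    using embedding_a_structure[OF h] by auto
  have "inj_on h' (univ M) = inj_on h (univ M)" by (rule inj_on_cong) (rule eq)
  then show "inj_on h' (univ M)" using embedding_inj_on[OF h] by simp
  show "h' ` univ M \<subseteq> univ N" using embedding_image_subset[OF h] eq by auto
  show "h' (funs M f xs) = funs N f (map h' xs)" if "length xs = arf f" "set xs \<subseteq> univ M" for f xs
  proof -
    have "h' (funs M f xs) = h (funs M f xs)"
      using eq a_structureD(2)[OF embedding_a_structure(1)[OF h] that] .
    also have "\<dots> = funs N f (map h xs)" using embedding_funs[OF h that] .
    also have "map h xs = map h' xs" using that(2) eq by auto
    finally show ?thesis .
  qed
  show "eval_qf A N (h' \<circ> e) \<phi> = eval_qf A M e \<phi>" if "wf_qf arp arf \<phi>" "range e \<subseteq> univ M" for \<phi> e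
  proof -
    have "h' \<circ> e = h \<circ> e" using that(2) eq by (auto simp: fun_eq_iff range_subsetD)
    then show ?thesis using embedding_eval_qf[OF h that] by simp
  qed
qed

lemma embedding_inv_into:
  assumes h: "embedding A arp arf h M N" and onto: "h ` univ M = univ N"
  shows "embedding A arp arf (inv_into (univ M) h) N M"
proof (rule embeddingI)
  let ?g = "inv_into (univ M) h"
  have inj: "inj_on h (univ M)" by (rule embedding_inj_on[OF h])
  have g_into: "?g y \<in> univ M" if "y \<in> univ N" for y
    using that onto by (auto intro: inv_into_into)
  have h_g: "h (?g y) = y" if "y \<in> univ N" for y
    using that onto by (auto intro: f_inv_into_f)
  show M: "a_structure A arp arf M" and "a_structure A arp arf N"
    using embedding_a_structure[OF h] by auto
  show "inj_on ?g (univ N)" by (rule inj_on_inv_into) (simp add: onto)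
  show "?g ` univ N \<subseteq> univ M" using g_into by blast
  show "?g (funs N f ys) = funs M f (map ?g ys)" if "length ys = arf f" "set ys \<subseteq> univ N" for f ys
  proof -
    have xs: "length (map ?g ys) = arf f" "set (map ?g ys) \<subseteq> univ M" using that g_into by auto
    have "map h (map ?g ys) = ys" using that(2) h_g by (auto intro!: map_idI)
    then have "funs N f ys = h (funs M f (map ?g ys))" using embedding_funs[OF h xs] by simp
    then show ?thesis using inj a_structureD(2)[OF M xs] by simp
  qed
  show "eval_qf A M (?g \<circ> e) \<phi> = eval_qf A N e \<phi>" if "wf_qf arp arf \<phi>" "range e \<subseteq> univ N" for \<phi> e
  proof -
    have "range (?g \<circ> e) \<subseteq> univ M" using that(2) g_into by auto
    then have "eval_qf A M (?g \<circ> e) \<phi> = eval_qf A N (h \<circ> (?g \<circ> e)) \<phi>"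
      using embedding_eval_qf[OF h that(1)] by simp
    also have "h \<circ> (?g \<circ> e) = e" using that(2) h_g by (auto simp: fun_eq_iff range_subsetD)
    finally show ?thesis .
  qed
qed

lemma isomorphic_sym:
  assumes "isomorphic A arp arf M N"
  shows "isomorphic A arp arf N M"
proof -
  obtain h where h: "embedding A arp arf h M N" "h ` univ M = univ N"
    using assms unfolding isomorphic_def by blast
  have "inv_into (univ M) h ` univ N = univ M"
    using inv_into_image_cancel[OF embedding_inj_on[OF h(1)], of "univ M"] h(2) by simp
  then show ?thesis unfolding isomorphic_def using embedding_inv_into[OF h] by blast
qed

lemma isomorphic_trans:
  assumes "isomorphic A arp arf M N" "isomorphic A arp arf N P"
  shows "isomorphic A arp arf M P"
proof -
  obtain h k where h: "embedding A arp arf h M N" "h ` univ M = univ N"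
    and k: "embedding A arp arf k N P" "k ` univ N = univ P"
    using assms unfolding isomorphic_def by blast
  have "(k \<circ> h) ` univ M = univ P" unfolding image_comp[symmetric] using h(2) k(2) by simp
  then show ?thesis unfolding isomorphic_def using embedding_comp[OF h(1) k(1)] by blast
qed

lemma substructure_refl: "a_structure A arp arf M \<Longrightarrow> substructure A arp arf M M"
  unfolding substructure_def by auto

lemma substructure_trans:
  assumes "substructure A arp arf M N" "substructure A arp arf N P"
  shows "substructure A arp arf M P"
  using embedding_comp[OF assms[unfolded substructure_iff_embedding_id]]
  unfolding substructure_iff_embedding_id by simp

definition embeds ::
  "'a ul_alg \<Rightarrow> ('p \<Rightarrow> nat) \<Rightarrow> ('f \<Rightarrow> nat) \<Rightarrow>
   ('m, 'p, 'f, 'a) struct \<Rightarrow> ('n, 'p, 'f, 'a) struct \<Rightarrow> bool"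
  where "embeds A arp arf M N \<longleftrightarrow> (\<exists>h. embedding A arp arf h M N)"

lemma embeds_trans: "embeds A arp arf M N \<Longrightarrow> embeds A arp arf N P \<Longrightarrow> embeds A arp arf M P"
  unfolding embeds_def using embedding_comp by blast

lemma isomorphic_embeds:
  assumes "isomorphic A arp arf M N"
  shows "embeds A arp arf M N" and "embeds A arp arf N M"
  using assms isomorphic_sym[OF assms] unfolding isomorphic_def embeds_def by blast+

lemma substructure_embeds: "substructure A arp arf M N \<Longrightarrow> embeds A arp arf M N"
  unfolding substructure_iff_embedding_id embeds_def by blast

lemma eval_tm_in_univ:
  assumes M: "a_structure A arp arf M" and e: "range e \<subseteq> univ M"
  shows "wf_tm arf t \<Longrightarrow> eval_tm M e t \<in> univ M"
proof (induction t)
  case (Fn f ts)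
  then show ?case using a_structureD(2)[OF M, of "map (eval_tm M e) ts" f] by auto
qed (use e in auto)

lemma eval_tm_map:
  assumes M: "a_structure A arp arf M" and e: "range e \<subseteq> univ M"
    and funs: "\<And>f xs. length xs = arf f \<Longrightarrow> set xs \<subseteq> univ M \<Longrightarrow> h (funs M f xs) = funs N f (map h xs)"
  shows "wf_tm arf t \<Longrightarrow> h (eval_tm M e t) = eval_tm N (h \<circ> e) t"
proof (induction t)
  case (Fn f ts)
  have "set (map (eval_tm M e) ts) \<subseteq> univ M" using Fn.prems eval_tm_in_univ[OF M e] by auto
  then have "h (eval_tm M e (Fn f ts)) = funs N f (map h (map (eval_tm M e) ts))"
    using Fn.prems funs[of "map (eval_tm M e) ts" f] by simp
  also have "map h (map (eval_tm M e) ts) = map (eval_tm N (h \<circ> e)) ts"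
    using Fn by (simp add: comp_def)
  finally show ?case by (simp only: eval_tm.simps)
qed simp

(* Without an assignment into univ M no formula constrains the predicates, hence the
   nonemptiness hypothesis on preds. *)
lemma embeddingI_atomic:
  assumes M: "a_structure A arp arf M" and N: "a_structure A arp arf N"
    and inj: "inj_on h (univ M)" and into: "h ` univ M \<subseteq> univ N"
    and funs: "\<And>f xs. length xs = arf f \<Longrightarrow> set xs \<subseteq> univ M \<Longrightarrow> h (funs M f xs) = funs N f (map h xs)"
    and preds: "\<And>p xs. univ M \<noteq> {} \<Longrightarrow> length xs = arp p \<Longrightarrow> set xs \<subseteq> univ M \<Longrightarrow>
      preds N p (map h xs) = preds M p xs"
  shows "embedding A arp arf h M N"
proof (rule embeddingI[OF M N inj into funs])
  fix \<phi> and e :: "nat \<Rightarrow> _"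
  assume "wf_qf arp arf \<phi>" and e: "range e \<subseteq> univ M"
  then show "eval_qf A N (h \<circ> e) \<phi> = eval_qf A M e \<phi>"
  proof (induction \<phi>)
    case (Atom p ts)
    have tms: "map (eval_tm N (h \<circ> e)) ts = map h (map (eval_tm M e) ts)"
      using Atom eval_tm_map[OF M e funs] by auto
    have "set (map (eval_tm M e) ts) \<subseteq> univ M" using Atom eval_tm_in_univ[OF M e] by auto
    moreover have "univ M \<noteq> {}" using e by blast
    ultimately show ?case unfolding eval_qf.simps tms using Atom by (intro preds) auto
  qed simp_all
qed

lemma substructure_preds:
  assumes S: "substructure A arp arf M N" and ne: "univ M \<noteq> {}"
    and xs: "length xs = arp p" "set xs \<subseteq> univ M"
  shows "preds M p xs = preds N p xs"
proof -
  obtain x0 where x0: "x0 \<in> univ M" using ne by blast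
  define e where "e i = (if i < length xs then xs ! i else x0)" for i
  have e: "range e \<subseteq> univ M" using xs(2) x0 by (auto simp: e_def)
  have "map e [0..<length xs] = xs" by (rule nth_equalityI) (auto simp: e_def)
  then have "eval_qf A M e (Atom p (map Var [0..<length xs])) = preds M p xs"
    and "eval_qf A N e (Atom p (map Var [0..<length xs])) = preds N p xs"
    by (simp_all add: comp_def)
  then show ?thesis using substructure_eval_qf[OF S _ e, of "Atom p (map Var [0..<length xs])"] xs(1)
    by simp
qed

lemma substructure_restrict:
  assumes N: "a_structure A arp arf N" and U: "U \<subseteq> univ N"
    and closed: "\<And>f xs. length xs = arf f \<Longrightarrow> set xs \<subseteq> U \<Longrightarrow> funs N f xs \<in> U"
  shows "substructure A arp arf (N\<lparr>univ := U\<rparr>) N"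
proof -
  have "a_structure A arp arf (N\<lparr>univ := U\<rparr>)"
    using a_structureD(1)[OF N] U closed unfolding a_structure_def by auto
  then show ?thesis
    unfolding substructure_iff_embedding_id using N U by (intro embeddingI_atomic) auto
qed

lemma embedding_into_substructure:
  assumes h: "embedding A arp arf h M N" and S: "substructure A arp arf S N"
    and into: "h ` univ M \<subseteq> univ S"
  shows "embedding A arp arf h M S"
proof (rule embeddingI)
  show "a_structure A arp arf M" "a_structure A arp arf S"
    using embedding_a_structure(1)[OF h] substructure_a_structure(1)[OF S] .
  show "inj_on h (univ M)" "h ` univ M \<subseteq> univ S" using embedding_inj_on[OF h] into .
  show "h (funs M f xs) = funs S f (map h xs)" if "length xs = arf f" "set xs \<subseteq> univ M" for f xs
  proof -
    have "set (map h xs) \<subseteq> univ S" using that(2) into by auto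
    then show ?thesis using that(1) embedding_funs[OF h that] substructure_funs[OF S] by simp
  qed
  show "eval_qf A S (h \<circ> e) \<phi> = eval_qf A M e \<phi>" if "wf_qf arp arf \<phi>" "range e \<subseteq> univ M" for \<phi> e
    using that into embedding_eval_qf[OF h that] substructure_eval_qf[OF S that(1), of "h \<circ> e"]
    by (auto simp: image_comp[symmetric])
qed

lemma substructure_subset:
  assumes "substructure A arp arf C N" "substructure A arp arf S N" "univ C \<subseteq> univ S"
  shows "substructure A arp arf C S"
  using embedding_into_substructure[OF assms(1)[unfolded substructure_iff_embedding_id] assms(2)] assms(3)
  unfolding substructure_iff_embedding_id by simp

lemma embedding_image:
  assumes h: "embedding A arp arf h M N"
  shows "substructure A arp arf (N\<lparr>univ := h ` univ M\<rparr>) N"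
    and "isomorphic A arp arf M (N\<lparr>univ := h ` univ M\<rparr>)"
proof -
  have closed: "funs N f ys \<in> h ` univ M" if "length ys = arf f" "set ys \<subseteq> h ` univ M" for f ys
  proof -
    define xs where "xs = map (inv_into (univ M) h) ys"
    have xs: "length xs = arf f" "set xs \<subseteq> univ M"
      using that by (auto simp: xs_def inv_into_into)
    have "map h xs = ys" using that(2) unfolding xs_def by (simp add: map_idI f_inv_into_f subset_iff)
    then show ?thesis
      using embedding_funs[OF h xs] a_structureD(2)[OF embedding_a_structure(1)[OF h] xs] by force
  qed
  show S: "substructure A arp arf (N\<lparr>univ := h ` univ M\<rparr>) N"
    using substructure_restrict[OF embedding_a_structure(2)[OF h] embedding_image_subset[OF h] closed] .
  show "isomorphic A arp arf M (N\<lparr>univ := h ` univ M\<rparr>)"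
    unfolding isomorphic_def using embedding_into_substructure[OF h S] by auto
qed

section \<open>Generated substructures\<close>

lemma generated_least:
  assumes "X \<subseteq> U"
    and "\<And>f xs. length xs = arf f \<Longrightarrow> set xs \<subseteq> generated arf M X \<Longrightarrow> set xs \<subseteq> U \<Longrightarrow> funs M f xs \<in> U"
  shows "generated arf M X \<subseteq> U"
proof
  fix x assume "x \<in> generated arf M X"
  then show "x \<in> U"
  proof induction
    case (gen_fun xs f)
    then show ?case using assms(2) by blast
  qed (use assms(1) in blast)
qed

lemma generated_subset_univ:
  assumes "a_structure A arp arf M" "X \<subseteq> univ M"
  shows "generated arf M X \<subseteq> univ M"
  by (rule generated_least[OF assms(2)]) (rule a_structureD(2)[OF assms(1)])

lemma generated_univ_update: "generated arf (M\<lparr>univ := U\<rparr>) X = generated arf M X"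
proof
  show "generated arf (M\<lparr>univ := U\<rparr>) X \<subseteq> generated arf M X"
  proof
    fix x assume "x \<in> generated arf (M\<lparr>univ := U\<rparr>) X"
    then show "x \<in> generated arf M X"
      by induction (auto intro: generated.intros)
  qed
  show "generated arf M X \<subseteq> generated arf (M\<lparr>univ := U\<rparr>) X"
  proof
    fix x assume "x \<in> generated arf M X"
    then show "x \<in> generated arf (M\<lparr>univ := U\<rparr>) X"
      by induction (auto intro: generated.intros[where M="M\<lparr>univ := U\<rparr>", simplified])
  qed
qed

lemma embedding_image_generated:
  assumes h: "embedding A arp arf h M N" and X: "X \<subseteq> univ M"
  shows "h ` generated arf M X \<subseteq> generated arf N (h ` X)"
proof (rule image_subsetI)
  fix x assume "x \<in> generated arf M X"
  then show "h x \<in> generated arf N (h ` X)"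
  proof induction
    case (gen_base x)
    then show ?case by (blast intro: generated.gen_base)
  next
    case (gen_fun xs f)
    have "set xs \<subseteq> univ M"
      using gen_fun generated_subset_univ[OF embedding_a_structure(1)[OF h] X] by blast
    then have "h (funs M f xs) = funs N f (map h xs)" using embedding_funs[OF h gen_fun(1)] by blast
    moreover have "funs N f (map h xs) \<in> generated arf N (h ` X)"
      using gen_fun by (intro generated.gen_fun) auto
    ultimately show ?case by simp
  qed
qed

lemma fin_gen_isomorphic:
  assumes iso: "isomorphic A arp arf M N" and fg: "fin_gen arf M"
  shows "fin_gen arf N"
proof -
  obtain h where h: "embedding A arp arf h M N" "h ` univ M = univ N"
    using iso unfolding isomorphic_def by blast
  obtain X where X: "finite X" "X \<subseteq> univ M" "univ M = generated arf M X"
    using fg unfolding fin_gen_def by blast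
  have hX: "h ` X \<subseteq> univ N" using X(2) h(2) by blast
  have "univ N \<subseteq> generated arf N (h ` X)"
    using embedding_image_generated[OF h(1) X(2)] X(3) h(2) by simp
  moreover have "generated arf N (h ` X) \<subseteq> univ N"
    by (rule generated_subset_univ[OF embedding_a_structure(2)[OF h(1)] hX])
  ultimately have "univ N = generated arf N (h ` X)" by (rule antisym)
  then show ?thesis unfolding fin_gen_def using X(1) hX by blast
qed

lemma generated_substructure_subset:
  assumes C: "substructure A arp arf C N" and X: "univ C = generated arf C X" "X \<subseteq> U"
    and closed: "\<And>f xs. length xs = arf f \<Longrightarrow> set xs \<subseteq> U \<Longrightarrow> funs N f xs \<in> U"
  shows "univ C \<subseteq> U"
proof -
  have "generated arf C X \<subseteq> U"
  proof (rule generated_least[OF X(2)])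
    fix f xs assume "length xs = arf f" "set xs \<subseteq> generated arf C X" "set xs \<subseteq> U"
    then show "funs C f xs \<in> U" using substructure_funs[OF C] closed[of xs f] X(1) by auto
  qed
  then show ?thesis using X(1) by simp
qed


section \<open>Ages\<close>

lemma isomorphic_age_if_embeds:
  assumes "fin_gen arf C" "embeds A arp arf C N"
  shows "\<exists>S\<in>age A arp arf N. isomorphic A arp arf C S"
proof -
  obtain h where h: "embedding A arp arf h C N" using assms(2) unfolding embeds_def by blast
  have "fin_gen arf (N\<lparr>univ := h ` univ C\<rparr>)" using fin_gen_isomorphic embedding_image(2)[OF h] assms(1) .
  then show ?thesis using embedding_image[OF h] unfolding age_def by blast
qed

lemma HP_embeds:
  assumes "HP A arp arf K" "B \<in> K" "embeds A arp arf C B" "fin_gen arf C"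
  shows "\<exists>B'\<in>K. isomorphic A arp arf C B'"
proof -
  obtain S where S: "S \<in> age A arp arf B" "isomorphic A arp arf C S"
    using isomorphic_age_if_embeds[OF assms(4,3)] by blast
  then obtain B' where "B' \<in> K" "isomorphic A arp arf S B'"
    using assms(1,2) unfolding HP_def age_def by blast
  then show ?thesis using isomorphic_trans[OF S(2)] by blast
qed

lemma HP_if_age:
  assumes eq: "eq_upto_iso A arp arf K (age A arp arf N)"
  shows "HP A arp arf K"
  unfolding HP_def
proof (intro ballI allI impI)
  fix B C assume "B \<in> K" and C: "fin_gen arf C \<and> substructure A arp arf C B"
  then obtain B' where B': "B' \<in> age A arp arf N" "isomorphic A arp arf B B'"
    using eq unfolding eq_upto_iso_def by blast
  have "embeds A arp arf C B" "embeds A arp arf B B'" "embeds A arp arf B' N"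
    using C B' substructure_embeds isomorphic_embeds(1) unfolding age_def by blast+
  then have "embeds A arp arf C N" by (meson embeds_trans)
  then obtain S where "S \<in> age A arp arf N" "isomorphic A arp arf C S"
    using isomorphic_age_if_embeds C by blast
  then show "\<exists>B'\<in>K. isomorphic A arp arf C B'"
    using eq isomorphic_trans unfolding eq_upto_iso_def by blast
qed

lemma age_directed:
  assumes N: "a_structure A arp arf N" and C1: "C1 \<in> age A arp arf N" and C2: "C2 \<in> age A arp arf N"
  shows "\<exists>S\<in>age A arp arf N. substructure A arp arf C1 S \<and> substructure A arp arf C2 S"
proof -
  obtain X1 where X1: "finite X1" "X1 \<subseteq> univ C1" "univ C1 = generated arf C1 X1"
    and C1N: "substructure A arp arf C1 N"
    using C1 unfolding age_def fin_gen_def by blast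
  obtain X2 where X2: "finite X2" "X2 \<subseteq> univ C2" "univ C2 = generated arf C2 X2"
    and C2N: "substructure A arp arf C2 N"
    using C2 unfolding age_def fin_gen_def by blast
  define G where "G = generated arf N (X1 \<union> X2)"
  have X_G: "X1 \<subseteq> G" "X2 \<subseteq> G" unfolding G_def by (auto intro: generated.gen_base)
  have closed: "funs N f xs \<in> G" if "length xs = arf f" "set xs \<subseteq> G" for f xs
    using that unfolding G_def by (blast intro: generated.gen_fun)
  have "X1 \<union> X2 \<subseteq> univ N"
    using X1(2) X2(2) substructure_univ[OF C1N] substructure_univ[OF C2N] by blast
  then have SN: "substructure A arp arf (N\<lparr>univ := G\<rparr>) N"
    using substructure_restrict[OF N _ closed] generated_subset_univ[OF N] unfolding G_def by blast
  have "fin_gen arf (N\<lparr>univ := G\<rparr>)"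
    unfolding fin_gen_def using X1(1) X2(1) X_G by (auto simp: G_def generated_univ_update)
  moreover have "substructure A arp arf C1 (N\<lparr>univ := G\<rparr>)" "substructure A arp arf C2 (N\<lparr>univ := G\<rparr>)"
    using substructure_subset[OF C1N SN] substructure_subset[OF C2N SN]
      generated_substructure_subset[OF C1N X1(3) X_G(1) closed]
      generated_substructure_subset[OF C2N X2(3) X_G(2) closed] by auto
  ultimately show ?thesis using SN unfolding age_def by blast
qed

lemma JEP_if_age:
  assumes N: "a_structure A arp arf N" and eq: "eq_upto_iso A arp arf K (age A arp arf N)"
  shows "JEP A arp arf K"
  unfolding JEP_def
proof (intro ballI)
  fix B1 B2 assume "B1 \<in> K" "B2 \<in> K"
  then obtain C1 C2 where C: "C1 \<in> age A arp arf N" "C2 \<in> age A arp arf N"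
    "isomorphic A arp arf B1 C1" "isomorphic A arp arf B2 C2"
    using eq unfolding eq_upto_iso_def by meson
  obtain S where S: "S \<in> age A arp arf N" "substructure A arp arf C1 S" "substructure A arp arf C2 S"
    using age_directed[OF N C(1,2)] by blast
  obtain D where D: "D \<in> K" "isomorphic A arp arf S D"
    using eq S(1) unfolding eq_upto_iso_def by blast
  have "embeds A arp arf B1 D" "embeds A arp arf B2 D"
    using C(3,4) S(2,3) D(2) by (meson embeds_trans isomorphic_embeds substructure_embeds)+
  then show "\<exists>D\<in>K. \<exists>h1 h2. embedding A arp arf h1 B1 D \<and> embedding A arp arf h2 B2 D"
    using D(1) unfolding embeds_def by blast
qed

lemma eq_upto_iso_ageI:
  assumes hp: "HP A arp arf K" and fg: "\<forall>B\<in>K. fin_gen arf B"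
    and into_N: "\<And>B. B \<in> K \<Longrightarrow> embeds A arp arf B N"
    and age_into: "\<And>C. C \<in> age A arp arf N \<Longrightarrow> \<exists>B\<in>K. embeds A arp arf C B"
  shows "eq_upto_iso A arp arf K (age A arp arf N)"
  unfolding eq_upto_iso_def
proof (intro conjI ballI)
  fix B assume "B \<in> K"
  then show "\<exists>C\<in>age A arp arf N. isomorphic A arp arf B C"
    using isomorphic_age_if_embeds fg into_N by blast
next
  fix C assume C: "C \<in> age A arp arf N"
  then obtain B where "B \<in> K" "embeds A arp arf C B" using age_into by blast
  then show "\<exists>B\<in>K. isomorphic A arp arf C B" using HP_embeds[OF hp] C unfolding age_def by blast
qed

section \<open>Isomorphic copies on a new carrier\<close>

definition transport :: "('b \<Rightarrow> 'c) \<Rightarrow> ('c \<Rightarrow> 'b) \<Rightarrow> ('b, 'p, 'f, 'a) struct \<Rightarrow> ('c, 'p, 'f, 'a) struct"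
  where "transport g gi E =
    \<lparr>univ = g ` univ E,
     preds = (\<lambda>p xs. preds E p (map gi xs)),
     funs = (\<lambda>f xs. g (funs E f (map gi xs)))\<rparr>"

lemma transport:
  assumes E: "a_structure A arp arf E" and gi: "\<And>y. y \<in> univ E \<Longrightarrow> gi (g y) = y"
  shows embedding_transport: "embedding A arp arf g E (transport g gi E)"
    and isomorphic_transport: "isomorphic A arp arf E (transport g gi E)"
proof -
  let ?T = "transport g gi E"
  have map_gi: "map (gi \<circ> g) xs = xs" if "set xs \<subseteq> univ E" for xs
    using that gi by (induction xs) auto
  have gi_into: "set (map gi xs) \<subseteq> univ E" if "set xs \<subseteq> g ` univ E" for xs
    using that gi by auto
  have T: "a_structure A arp arf ?T"
    unfolding a_structure_def transport_def using a_structureD[OF E] gi_into by auto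
  show emb: "embedding A arp arf g E ?T"
  proof (rule embeddingI_atomic[OF E T])
    show "inj_on g (univ E)" using gi by (rule inj_on_inverseI)
    show "g ` univ E \<subseteq> univ ?T" by (simp add: transport_def)
    show "g (funs E f xs) = funs ?T f (map g xs)" if "length xs = arf f" "set xs \<subseteq> univ E" for f xs
      using map_gi[OF that(2)] by (simp add: transport_def)
    show "preds ?T p (map g xs) = preds E p xs"
      if "univ E \<noteq> {}" "length xs = arp p" "set xs \<subseteq> univ E" for p xs
      using map_gi[OF that(3)] by (simp add: transport_def)
  qed
  then show "isomorphic A arp arf E ?T"
    unfolding isomorphic_def by (auto simp: transport_def)
qed

lemma transport_substructure:
  assumes S: "substructure A arp arf M M'" and gi: "\<And>y. y \<in> univ M' \<Longrightarrow> gi (g y) = y"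
  shows "substructure A arp arf (transport g gi M) (transport g gi M')"
proof -
  have gi_M: "\<And>y. y \<in> univ M \<Longrightarrow> gi (g y) = y" using gi substructure_univ[OF S] by blast
  have e: "embedding A arp arf g M (transport g gi M)"
    using embedding_transport[where g = g and gi = gi, OF substructure_a_structure(1)[OF S] gi_M] .
  have e': "embedding A arp arf g M' (transport g gi M')"
    using embedding_transport[where g = g and gi = gi, OF substructure_a_structure(2)[OF S] gi] .
  have "embedding A arp arf (inv_into (univ M) g) (transport g gi M) M"
    using embedding_inv_into[OF e] by (simp add: transport_def)
  then have "embedding A arp arf (g \<circ> (id \<circ> inv_into (univ M) g)) (transport g gi M) (transport g gi M')"
    using S[unfolded substructure_iff_embedding_id] e' by (blast intro: embedding_comp)
  then show ?thesis unfolding substructure_iff_embedding_id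
    by (rule embedding_cong) (auto simp: transport_def f_inv_into_f)
qed

lemma tagged_copy:
  fixes D :: "('m, 'p, 'f, 'a) struct"
  assumes "a_structure A arp arf D"
  shows "\<exists>M :: ('m \<times> nat, 'p, 'f, 'a) struct. snd ` univ M \<subseteq> {..0} \<and> isomorphic A arp arf M D"
proof -
  let ?M = "transport (\<lambda>x. (x, 0 :: nat)) fst D"
  have "isomorphic A arp arf D ?M" by (rule isomorphic_transport[OF assms]) simp
  moreover have "snd ` univ ?M \<subseteq> {..0}" by (auto simp: transport_def)
  ultimately show ?thesis using isomorphic_sym by blast
qed

lemma extend_tagged_copy:
  fixes M :: "('m \<times> nat, 'p, 'f, 'a) struct" and D :: "('m, 'p, 'f, 'a) struct"
  assumes tags: "snd ` univ M \<subseteq> {..n}" and "embeds A arp arf M D"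
  shows "\<exists>M'. substructure A arp arf M M' \<and> snd ` univ M' \<subseteq> {..Suc n} \<and> isomorphic A arp arf M' D"
proof -
  obtain h where h: "embedding A arp arf h M D" using assms(2) unfolding embeds_def by blast
  have D: "a_structure A arp arf D" using embedding_a_structure(2)[OF h] .
  define g where "g y = (if y \<in> h ` univ M then inv_into (univ M) h y else (y, Suc n))" for y
  define gi where "gi z = (if z \<in> univ M then h z else fst z)" for z
  have fresh: "(y, Suc n) \<notin> univ M" for y using tags by force
  have gi_g: "gi (g y) = y" for y
  proof (cases "y \<in> h ` univ M")
    case True
    then show ?thesis by (simp add: g_def gi_def inv_into_into f_inv_into_f)
  qed (simp add: g_def gi_def fresh)
  have g_h: "g (h x) = x" if "x \<in> univ M" for x
    using that embedding_inj_on[OF h] by (simp add: g_def)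
  let ?M' = "transport g gi D"
  have "embedding A arp arf (g \<circ> h) M ?M'"
    using embedding_comp[OF h embedding_transport[where g = g and gi = gi, OF D]] gi_g by blast
  then have "substructure A arp arf M ?M'"
    unfolding substructure_iff_embedding_id by (rule embedding_cong) (simp add: g_h)
  moreover have "snd (g y) \<le> Suc n" for y
  proof (cases "y \<in> h ` univ M")
    case True
    then have "inv_into (univ M) h y \<in> univ M" by (rule inv_into_into)
    then show ?thesis using tags True by (auto simp: g_def)
  qed (simp add: g_def)
  then have "snd ` univ ?M' \<subseteq> {..Suc n}" by (auto simp: transport_def)
  moreover have "isomorphic A arp arf D ?M'" by (rule isomorphic_transport[OF D]) (rule gi_g)
  ultimately show ?thesis using isomorphic_sym by blast
qed

section \<open>Unions of \<omega>-chains\<close>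

(* Values are read off a nonempty stage: a stage with empty carrier does not constrain the
   predicates at the empty tuple, which is also why union_chain, choosing an arbitrary stage,
   is not used here. *)
definition first_stage :: "(nat \<Rightarrow> ('m, 'p, 'f, 'a) struct) \<Rightarrow> 'm list \<Rightarrow> nat" where
  "first_stage Ms xs = (LEAST k. set xs \<subseteq> univ (Ms k) \<and> univ (Ms k) \<noteq> {})"

definition seq_union :: "(nat \<Rightarrow> ('m, 'p, 'f, 'a) struct) \<Rightarrow> ('m, 'p, 'f, 'a) struct" where
  "seq_union Ms =
    \<lparr>univ = (\<Union>n. univ (Ms n)),
     preds = (\<lambda>p xs. preds (Ms (first_stage Ms xs)) p xs),
     funs = (\<lambda>f xs. funs (Ms (first_stage Ms xs)) f xs)\<rparr>"

lemma univ_seq_union [simp]: "univ (seq_union Ms) = (\<Union>n. univ (Ms n))"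
  by (simp add: seq_union_def)

locale substructure_chain =
  fixes A :: "'a ul_alg" and arp :: "'p \<Rightarrow> nat" and arf :: "'f \<Rightarrow> nat"
    and Ms :: "nat \<Rightarrow> ('m, 'p, 'f, 'a) struct"
  assumes substructure_Suc: "substructure A arp arf (Ms n) (Ms (Suc n))"
begin

lemma a_structure_stage: "a_structure A arp arf (Ms n)"
  using substructure_a_structure(1)[OF substructure_Suc] .

lemma first_stage:
  assumes "set xs \<subseteq> univ (Ms n)" "univ (Ms n) \<noteq> {}"
  shows "set xs \<subseteq> univ (Ms (first_stage Ms xs))" and "univ (Ms (first_stage Ms xs)) \<noteq> {}"
  using LeastI[of "\<lambda>k. set xs \<subseteq> univ (Ms k) \<and> univ (Ms k) \<noteq> {}" n] assms
  unfolding first_stage_def by auto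

lemma substructure_le: "i \<le> j \<Longrightarrow> substructure A arp arf (Ms i) (Ms j)"
proof (induction rule: dec_induct)
  case base
  then show ?case using substructure_refl[OF a_structure_stage] .
next
  case (step j)
  then show ?case using substructure_trans substructure_Suc by blast
qed

lemma univ_mono: "i \<le> j \<Longrightarrow> univ (Ms i) \<subseteq> univ (Ms j)"
  using substructure_univ[OF substructure_le] .

lemma finite_subset_stage:
  assumes "finite X" "X \<subseteq> (\<Union>n. univ (Ms n))"
  shows "\<exists>n. X \<subseteq> univ (Ms n)"
proof -
  have "subset.chain UNIV (range (\<lambda>n. univ (Ms n)))"
    unfolding subset_chain_def using univ_mono nat_le_linear by blast
  then show ?thesis using finite_subset_Union_chain[OF assms] by blast
qed

lemma stages_agree:
  assumes i: "set xs \<subseteq> univ (Ms i)" and j: "set xs \<subseteq> univ (Ms j)"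
  shows "length xs = arf f \<Longrightarrow> funs (Ms i) f xs = funs (Ms j) f xs"
    and "length xs = arp p \<Longrightarrow> univ (Ms i) \<noteq> {} \<Longrightarrow> univ (Ms j) \<noteq> {} \<Longrightarrow>
      preds (Ms i) p xs = preds (Ms j) p xs"
proof -
  consider "i \<le> j" | "j \<le> i" by linarith
  note le = this
  show "funs (Ms i) f xs = funs (Ms j) f xs" if "length xs = arf f"
    using le by cases (simp_all add: substructure_funs[OF substructure_le that i]
      substructure_funs[OF substructure_le that j])
  show "preds (Ms i) p xs = preds (Ms j) p xs"
    if "length xs = arp p" "univ (Ms i) \<noteq> {}" "univ (Ms j) \<noteq> {}"
    using le by cases (simp_all add: substructure_preds[OF substructure_le that(2,1) i]
      substructure_preds[OF substructure_le that(3,1) j])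
qed

lemma funs_seq_union:
  assumes "length xs = arf f" "set xs \<subseteq> univ (Ms n)"
  shows "funs (seq_union Ms) f xs = funs (Ms n) f xs"
proof -
  have "univ (Ms n) \<noteq> {}" using a_structureD(2)[OF a_structure_stage assms] by blast
  then have "set xs \<subseteq> univ (Ms (first_stage Ms xs))" by (rule first_stage(1)[OF assms(2)])
  then show ?thesis using stages_agree(1)[OF _ assms(2,1)] by (simp add: seq_union_def)
qed

lemma preds_seq_union:
  assumes "length xs = arp p" "set xs \<subseteq> univ (Ms n)" "univ (Ms n) \<noteq> {}"
  shows "preds (seq_union Ms) p xs = preds (Ms n) p xs"
proof -
  have "set xs \<subseteq> univ (Ms (first_stage Ms xs))" "univ (Ms (first_stage Ms xs)) \<noteq> {}"
    using first_stage[OF assms(2,3)] by auto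
  then show ?thesis using stages_agree(2)[OF _ assms(2,1) _ assms(3)] by (simp add: seq_union_def)
qed

lemma a_structure_seq_union: "a_structure A arp arf (seq_union Ms)"
proof -
  have stage: "\<exists>n. set xs \<subseteq> univ (Ms n)" if "set xs \<subseteq> univ (seq_union Ms)" for xs
    using finite_subset_stage[of "set xs"] that by simp
  have "preds (seq_union Ms) p xs \<in> carrier A"
    if "length xs = arp p" "set xs \<subseteq> univ (Ms n)" for p xs n
  proof -
    have "set xs \<subseteq> univ (Ms (first_stage Ms xs))"
      using first_stage(1)[OF that(2)] that(2) by (cases "univ (Ms n) = {}") auto
    then show ?thesis using a_structureD(1)[OF a_structure_stage that(1)] by (simp add: seq_union_def)
  qed
  moreover have "funs (seq_union Ms) f xs \<in> univ (seq_union Ms)"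
    if "length xs = arf f" "set xs \<subseteq> univ (Ms n)" for f xs n
    using funs_seq_union[OF that] a_structureD(2)[OF a_structure_stage that] by auto
  ultimately show ?thesis unfolding a_structure_def using stage by meson
qed

lemma substructure_seq_union: "substructure A arp arf (Ms n) (seq_union Ms)"
  unfolding substructure_iff_embedding_id
proof (rule embeddingI_atomic[OF a_structure_stage a_structure_seq_union])
  show "id (funs (Ms n) f xs) = funs (seq_union Ms) f (map id xs)"
    if "length xs = arf f" "set xs \<subseteq> univ (Ms n)" for f xs
    using funs_seq_union[OF that] by simp
  show "preds (seq_union Ms) p (map id xs) = preds (Ms n) p xs"
    if "univ (Ms n) \<noteq> {}" "length xs = arp p" "set xs \<subseteq> univ (Ms n)" for p xs
    using preds_seq_union[OF that(2,3,1)] by simp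
qed auto

lemma fin_gen_substructure_seq_union:
  assumes fg: "fin_gen arf C" and C: "substructure A arp arf C (seq_union Ms)"
  shows "\<exists>n. substructure A arp arf C (Ms n)"
proof -
  obtain X where X: "finite X" "X \<subseteq> univ C" "univ C = generated arf C X"
    using fg unfolding fin_gen_def by blast
  obtain n where n: "X \<subseteq> univ (Ms n)"
    using finite_subset_stage[OF X(1)] X(2) substructure_univ[OF C] by force
  have "univ C \<subseteq> univ (Ms n)"
  proof (rule generated_substructure_subset[OF C X(3) n])
    fix f xs assume "length xs = arf f" "set xs \<subseteq> univ (Ms n)"
    then show "funs (seq_union Ms) f xs \<in> univ (Ms n)"
      using funs_seq_union a_structureD(2)[OF a_structure_stage] by metis
  qed
  then show ?thesis using substructure_subset[OF C substructure_seq_union] by blast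
qed

lemma is_chain_range: "is_chain A arp arf (range Ms)"
  unfolding is_chain_def using substructure_le nat_le_linear by blast

lemma funs_union_chain:
  assumes "length xs = arf f" "set xs \<subseteq> univ (Ms n)"
  shows "funs (union_chain (range Ms)) f xs = funs (Ms n) f xs"
proof -
  let ?Q = "\<lambda>y. \<exists>B\<in>range Ms. set xs \<subseteq> univ B \<and> y = funs B f xs"
  have "?Q (funs (Ms n) f xs)" using assms(2) by auto
  then have "?Q (SOME y. ?Q y)" by (rule someI)
  then obtain k where k: "set xs \<subseteq> univ (Ms k)" "(SOME y. ?Q y) = funs (Ms k) f xs" by auto
  have "funs (union_chain (range Ms)) f xs = (SOME y. ?Q y)" by (simp add: union_chain_def)
  also have "\<dots> = funs (Ms n) f xs" using k(2) stages_agree(1)[OF k(1) assms(2,1)] by simp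
  finally show ?thesis .
qed

lemma fin_gen_union_chain_stabilises:
  assumes "fin_gen arf (union_chain (range Ms))"
  obtains n where "univ (Ms (Suc n)) \<subseteq> univ (Ms n)"
proof -
  let ?V = "union_chain (range Ms)"
  have V: "univ ?V = (\<Union>n. univ (Ms n))" by (simp add: union_chain_def)
  obtain X where X: "finite X" "X \<subseteq> univ ?V" "univ ?V = generated arf ?V X"
    using assms unfolding fin_gen_def by blast
  obtain n where n: "X \<subseteq> univ (Ms n)" using finite_subset_stage[OF X(1)] X(2) V by force
  have "generated arf ?V X \<subseteq> univ (Ms n)"
  proof (rule generated_least[OF n])
    fix f xs assume "length xs = arf f" "set xs \<subseteq> univ (Ms n)"
    then show "funs ?V f xs \<in> univ (Ms n)"
      using funs_union_chain a_structureD(2)[OF a_structure_stage] by metis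
  qed
  then have "univ (Ms (Suc n)) \<subseteq> univ (Ms n)" using X(3) V by blast
  then show ?thesis by (rule that)
qed

end

section \<open>Constructing the structure\<close>

lemma bounded_incseq_stabilises:
  fixes S :: "nat \<Rightarrow> 'x set"
  assumes mono: "\<And>n. S n \<subseteq> S (Suc n)" and bounded: "\<And>n. finite (S n) \<and> card (S n) \<le> b"
  shows "\<exists>n. S (Suc n) \<subseteq> S n"
proof (rule ccontr)
  assume "\<not> ?thesis"
  then have strict: "S n \<subset> S (Suc n)" for n using mono by blast
  have "n \<le> card (S n)" for n
  proof (induction n)
    case (Suc n)
    then show ?case using psubset_card_mono[OF conjunct1[OF bounded] strict, of n] by simp
  qed simp
  then show False using bounded[of "Suc b"] by (meson not_less_eq_eq order_trans)
qed

lemma inj_prod_nat_if_infinite: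
  assumes "infinite (UNIV :: 'm set)"
  shows "\<exists>j :: 'm \<times> nat \<Rightarrow> 'm. inj j"
proof -
  have "ordIso2 (card_of ((UNIV :: 'm set) \<times> (UNIV :: nat set))) (card_of (UNIV :: 'm set))"
    using card_of_Times_infinite[OF assms _ assms[unfolded infinite_iff_card_of_nat]] by simp
  then obtain j :: "'m \<times> nat \<Rightarrow> 'm" where "bij_betw j (UNIV \<times> UNIV) UNIV"
    using card_of_ordIso by blast
  then show ?thesis by (auto simp: bij_betw_def)
qed

(* Closure under unions of chains only speaks about structures on 'm: for infinite 'm the
   chain is moved into 'm along an injection 'm \<times> nat \<Rightarrow> 'm, for finite 'm the stages are
   bounded in size. *)
lemma chain_of_copies_stabilises:
  fixes K :: "('m, 'p, 'f, 'a) struct set" and Ms :: "nat \<Rightarrow> ('m \<times> nat, 'p, 'f, 'a) struct"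
  assumes Ms: "substructure_chain A arp arf Ms"
    and copies: "\<And>n. \<exists>E\<in>K. isomorphic A arp arf (Ms n) E"
    and fg: "\<forall>B\<in>K. fin_gen arf B" and closed: "closed_under_chains A arp arf K"
  shows "\<exists>n. univ (Ms (Suc n)) \<subseteq> univ (Ms n)"
proof (cases "finite (UNIV :: 'm set)")
  case True
  have bounded: "finite (univ (Ms n)) \<and> card (univ (Ms n)) \<le> card (UNIV :: 'm set)" for n
  proof -
    obtain h :: "'m \<times> nat \<Rightarrow> 'm" where h: "inj_on h (univ (Ms n))"
      using copies[of n] unfolding isomorphic_def embedding_def by blast
    have "finite (h ` univ (Ms n))" by (rule finite_subset[OF subset_UNIV True])
    then have "finite (univ (Ms n))" by (rule finite_imageD[OF _ h])
    moreover have "card (univ (Ms n)) \<le> card (UNIV :: 'm set)"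
      by (rule card_inj_on_le[OF h subset_UNIV True])
    ultimately show ?thesis ..
  qed
  have mono: "univ (Ms n) \<subseteq> univ (Ms (Suc n))" for n
    using substructure_chain.univ_mono[OF Ms, of n "Suc n"] by simp
  show ?thesis using bounded_incseq_stabilises[where S = "\<lambda>n. univ (Ms n)", OF mono bounded] .
next
  case False
  then obtain j :: "'m \<times> nat \<Rightarrow> 'm" where j: "inj j" using inj_prod_nat_if_infinite by blast
  have inv_j: "inv j (j y) = y" for y using j by simp
  define T where "T n = transport j (inv j) (Ms n)" for n
  have iso_T: "isomorphic A arp arf (Ms n) (T n)" for n
    unfolding T_def by (rule isomorphic_transport[OF substructure_chain.a_structure_stage[OF Ms]]) (rule inv_j)
  interpret T: substructure_chain A arp arf T
    unfolding T_def
    by unfold_locales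
      (rule transport_substructure[where g = j and gi = "inv j", OF substructure_chain.substructure_Suc[OF Ms] inv_j])
  have "\<exists>E\<in>K. isomorphic A arp arf B E" if B: "B \<in> range T" for B
  proof -
    obtain n where n: "B = T n" using B by blast
    obtain E where E: "E \<in> K" "isomorphic A arp arf (Ms n) E" using copies by blast
    have "isomorphic A arp arf B E" unfolding n using isomorphic_trans[OF isomorphic_sym[OF iso_T] E(2)] .
    then show ?thesis using E(1) by blast
  qed
  then obtain B' where "B' \<in> K" "isomorphic A arp arf (union_chain (range T)) B'"
    using closed T.is_chain_range unfolding closed_under_chains_def by blast
  then have "fin_gen arf (union_chain (range T))" using fg fin_gen_isomorphic isomorphic_sym by blast
  then obtain n where "univ (T (Suc n)) \<subseteq> univ (T n)" by (rule T.fin_gen_union_chain_stabilises)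
  then have "univ (Ms (Suc n)) \<subseteq> univ (Ms n)"
    using inj_image_subset_iff[OF j] by (simp add: T_def transport_def)
  then show ?thesis by blast
qed

lemma chain_of_copies:
  fixes K :: "('m, 'p, 'f, 'a) struct set"
  assumes KB: "\<forall>B\<in>K. a_structure A arp arf B" and B: "B \<in> K"
    and step: "\<And>n E. E \<in> K \<Longrightarrow> \<exists>D\<in>K. embeds A arp arf E D \<and> R n E D"
  shows "\<exists>(Ms :: nat \<Rightarrow> ('m \<times> nat, 'p, 'f, 'a) struct) Es. substructure_chain A arp arf Ms \<and>
    (\<forall>n. Es n \<in> K \<and> isomorphic A arp arf (Ms n) (Es n) \<and> R n (Es n) (Es (Suc n))) \<and> Es 0 = B"
proof -
  define P where "P n ME \<longleftrightarrow> snd ` univ (fst ME) \<subseteq> {..n} \<and> snd ME \<in> K \<and>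
      isomorphic A arp arf (fst ME) (snd ME) \<and> (n = 0 \<longrightarrow> snd ME = B)"
    for n and ME :: "('m \<times> nat, 'p, 'f, 'a) struct \<times> ('m, 'p, 'f, 'a) struct"
  define Q where "Q n ME ME' \<longleftrightarrow> substructure A arp arf (fst ME) (fst ME') \<and> R n (snd ME) (snd ME')"
    for n and ME ME' :: "('m \<times> nat, 'p, 'f, 'a) struct \<times> ('m, 'p, 'f, 'a) struct"
  have "\<exists>ME. P 0 ME"
  proof -
    obtain M :: "('m \<times> nat, 'p, 'f, 'a) struct"
      where "snd ` univ M \<subseteq> {..0}" "isomorphic A arp arf M B"
      using tagged_copy KB B by blast
    then have "P 0 (M, B)" unfolding P_def using B by simp
    then show ?thesis ..
  qed
  moreover have "\<exists>ME'. P (Suc n) ME' \<and> Q n ME ME'" if PME: "P n ME" for n ME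
  proof -
    obtain M E where ME: "ME = (M, E)" by fastforce
    have tags: "snd ` univ M \<subseteq> {..n}" and E: "E \<in> K" "isomorphic A arp arf M E"
      using PME unfolding P_def ME by auto
    obtain D where D: "D \<in> K" "embeds A arp arf E D" "R n E D" using step[OF E(1)] by blast
    obtain M' where M': "substructure A arp arf M M'" "snd ` univ M' \<subseteq> {..Suc n}"
      "isomorphic A arp arf M' D"
      using extend_tagged_copy[OF tags embeds_trans[OF isomorphic_embeds(1)[OF E(2)] D(2)]] by blast
    have "P (Suc n) (M', D) \<and> Q n ME (M', D)" unfolding P_def Q_def ME using M' D by simp
    then show ?thesis ..
  qed
  ultimately obtain f where f: "\<forall>n. P n (f n) \<and> Q n (f n) (f (Suc n))"
    using dependent_nat_choice[of P Q] by blast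
  have "substructure_chain A arp arf (\<lambda>n. fst (f n))"
    using f unfolding Q_def by unfold_locales blast
  moreover have "snd (f n) \<in> K \<and> isomorphic A arp arf (fst (f n)) (snd (f n)) \<and>
      R n (snd (f n)) (snd (f (Suc n)))" for n
    using f unfolding P_def Q_def by blast
  moreover have "snd (f 0) = B" using f unfolding P_def by blast
  ultimately show ?thesis by (intro exI[of _ "\<lambda>n. fst (f n)"] exI[of _ "\<lambda>n. snd (f n)"]) blast
qed

lemma age_if_countable_HP_JEP:
  fixes K :: "('m, 'p, 'f, 'a) struct set"
  assumes ne: "K \<noteq> {}" and cnt: "countable_upto_iso A arp arf K"
    and KB: "\<forall>B\<in>K. a_structure A arp arf B \<and> fin_gen arf B"
    and hp: "HP A arp arf K" and jep: "JEP A arp arf K"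
  shows "\<exists>N :: ('m \<times> nat, 'p, 'f, 'a) struct.
    a_structure A arp arf N \<and> eq_upto_iso A arp arf K (age A arp arf N)"
proof -
  obtain K0 where K0: "K0 \<subseteq> K" "countable K0" "\<forall>B\<in>K. \<exists>B0\<in>K0. isomorphic A arp arf B B0"
    using cnt unfolding countable_upto_iso_def by blast
  have "K0 \<noteq> {}" using K0(3) ne by blast
  define en where "en = from_nat_into K0"
  have en_K: "en n \<in> K" for n
    using from_nat_into[OF \<open>K0 \<noteq> {}\<close>] K0(1) unfolding en_def by blast
  have en_onto: "\<exists>n. en n = B0" if "B0 \<in> K0" for B0
    using from_nat_into_surj[OF K0(2) that] unfolding en_def by blast
  have step: "\<exists>D\<in>K. embeds A arp arf E D \<and> embeds A arp arf (en (Suc n)) D" if "E \<in> K" for n E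
    using jep that en_K unfolding JEP_def embeds_def by blast
  obtain Ms :: "nat \<Rightarrow> ('m \<times> nat, 'p, 'f, 'a) struct" and Es
    where chain: "substructure_chain A arp arf Ms"
      and Es_n: "\<forall>n. Es n \<in> K \<and> isomorphic A arp arf (Ms n) (Es n) \<and>
        embeds A arp arf (en (Suc n)) (Es (Suc n))" and Es_0: "Es 0 = en 0"
    using chain_of_copies[where R = "\<lambda>n _ D. embeds A arp arf (en (Suc n)) D", OF _ en_K[of 0] step] KB
    by blast
  have Es: "Es n \<in> K" "isomorphic A arp arf (Ms n) (Es n)" for n using Es_n by blast+
  have en_Es: "Es 0 = en 0" "embeds A arp arf (en (Suc n)) (Es (Suc n))" for n using Es_0 Es_n by blast+
  interpret substructure_chain A arp arf Ms by (rule chain)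
  have en_Ms: "embeds A arp arf (en n) (Ms n)" for n
  proof (cases n)
    case 0
    then show ?thesis using en_Es(1) isomorphic_embeds(2)[OF Es(2), of 0] by simp
  next
    case (Suc m)
    then show ?thesis using embeds_trans[OF en_Es(2)[of m] isomorphic_embeds(2)[OF Es(2)]] by simp
  qed
  have "eq_upto_iso A arp arf K (age A arp arf (seq_union Ms))"
  proof (rule eq_upto_iso_ageI[OF hp])
    show "\<forall>B\<in>K. fin_gen arf B" using KB by blast
    show "embeds A arp arf B (seq_union Ms)" if B: "B \<in> K" for B
    proof -
      obtain B0 where B0: "B0 \<in> K0" "isomorphic A arp arf B B0" using K0(3) B by blast
      then obtain n where "en n = B0" using en_onto by blast
      then have "embeds A arp arf B (en n)" using isomorphic_embeds(1)[OF B0(2)] by simp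
      then show ?thesis
        using embeds_trans[OF _ embeds_trans[OF en_Ms substructure_embeds[OF substructure_seq_union]]]
        by blast
    qed
    show "\<exists>B\<in>K. embeds A arp arf C B" if C: "C \<in> age A arp arf (seq_union Ms)" for C
    proof -
      obtain n where n: "substructure A arp arf C (Ms n)"
        using fin_gen_substructure_seq_union C unfolding age_def by blast
      show ?thesis using embeds_trans[OF substructure_embeds[OF n] isomorphic_embeds(1)[OF Es(2)]] Es(1)
        by blast
    qed
  qed
  then show ?thesis using a_structure_seq_union by blast
qed

lemma universal_member_if_JEP_chain_closed:
  fixes K :: "('m, 'p, 'f, 'a) struct set"
  assumes ne: "K \<noteq> {}" and KB: "\<forall>B\<in>K. a_structure A arp arf B \<and> fin_gen arf B"
    and jep: "JEP A arp arf K" and closed: "closed_under_chains A arp arf K"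
  shows "\<exists>U\<in>K. \<forall>B\<in>K. embeds A arp arf B U"
proof (rule ccontr)
  assume no_universal: "\<not> ?thesis"
  have "\<exists>D\<in>K. embeds A arp arf E D \<and> \<not> embeds A arp arf D E" if E: "E \<in> K" for E
  proof -
    obtain B where B: "B \<in> K" "\<not> embeds A arp arf B E" using no_universal E by blast
    obtain D where D: "D \<in> K" "embeds A arp arf E D" "embeds A arp arf B D"
      using jep E B(1) unfolding JEP_def embeds_def by blast
    have "\<not> embeds A arp arf D E" using B(2) embeds_trans[OF D(3)] by blast
    then show ?thesis using D(1,2) by blast
  qed
  note step = this
  obtain B where B: "B \<in> K" using ne by blast
  obtain Ms :: "nat \<Rightarrow> ('m \<times> nat, 'p, 'f, 'a) struct" and Es
    where chain: "substructure_chain A arp arf Ms"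
      and Es_n: "\<forall>n. Es n \<in> K \<and> isomorphic A arp arf (Ms n) (Es n) \<and>
        \<not> embeds A arp arf (Es (Suc n)) (Es n)"
    using chain_of_copies[where R = "\<lambda>_ E D. \<not> embeds A arp arf D E", OF _ B step] KB by blast
  have Es: "Es n \<in> K" "isomorphic A arp arf (Ms n) (Es n)"
    and strict: "\<not> embeds A arp arf (Es (Suc n)) (Es n)" for n
    using Es_n by blast+
  interpret substructure_chain A arp arf Ms by (rule chain)
  have "\<exists>E\<in>K. isomorphic A arp arf (Ms n) E" for n using Es by blast
  then obtain n where "univ (Ms (Suc n)) \<subseteq> univ (Ms n)"
    using chain_of_copies_stabilises[OF chain] KB closed by blast
  then have "substructure A arp arf (Ms (Suc n)) (Ms n)"
    by (rule substructure_subset[OF substructure_refl[OF a_structure_stage] substructure_Suc])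
  then have stage_embeds: "embeds A arp arf (Ms (Suc n)) (Ms n)" by (rule substructure_embeds)
  have "embeds A arp arf (Es (Suc n)) (Es n)"
    using embeds_trans[OF isomorphic_embeds(2)[OF Es(2)]
        embeds_trans[OF stage_embeds isomorphic_embeds(1)[OF Es(2)]]] .
  then show False using strict by blast
qed

lemma age_if_HP_JEP_chain_closed:
  fixes K :: "('m, 'p, 'f, 'a) struct set"
  assumes ne: "K \<noteq> {}" and KB: "\<forall>B\<in>K. a_structure A arp arf B \<and> fin_gen arf B"
    and hp: "HP A arp arf K" and jep: "JEP A arp arf K" and closed: "closed_under_chains A arp arf K"
  shows "\<exists>N :: ('m \<times> nat, 'p, 'f, 'a) struct.
    a_structure A arp arf N \<and> eq_upto_iso A arp arf K (age A arp arf N)"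
proof -
  obtain U where U: "U \<in> K" "\<forall>B\<in>K. embeds A arp arf B U"
    using universal_member_if_JEP_chain_closed[OF ne KB jep closed] by blast
  obtain N :: "('m \<times> nat, 'p, 'f, 'a) struct" where N: "isomorphic A arp arf N U"
    using tagged_copy KB U(1) by blast
  have "eq_upto_iso A arp arf K (age A arp arf N)"
  proof (rule eq_upto_iso_ageI[OF hp])
    show "\<forall>B\<in>K. fin_gen arf B" using KB by blast
    show "embeds A arp arf B N" if "B \<in> K" for B
      using embeds_trans[OF _ isomorphic_embeds(2)[OF N]] U(2) that by blast
    show "\<exists>B\<in>K. embeds A arp arf C B" if "C \<in> age A arp arf N" for C
      using embeds_trans[OF substructure_embeds isomorphic_embeds(1)[OF N]] U(1) that
      unfolding age_def by blast
  qed
  moreover have "a_structure A arp arf N" using N unfolding isomorphic_def embedding_def by blast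
  ultimately show ?thesis by blast
qed

theorem theorem1:
  fixes A :: "'a ul_alg" and arp :: "'p \<Rightarrow> nat" and arf :: "'f \<Rightarrow> nat"
    and K :: "('m, 'p, 'f, 'a) struct set"
  assumes "ul_chain A"
  shows
    "(K \<noteq> {} \<and> countable_upto_iso A arp arf K \<and>
      (\<forall>B\<in>K. a_structure A arp arf B \<and> fin_gen arf B) \<longrightarrow>
      ((\<exists>N :: ('m \<times> nat, 'p, 'f, 'a) struct.
          a_structure A arp arf N \<and> eq_upto_iso A arp arf K (age A arp arf N))
       \<longleftrightarrow> HP A arp arf K \<and> JEP A arp arf K))
   \<and>
    (K \<noteq> {} \<and> (\<forall>B\<in>K. a_structure A arp arf B \<and> fin_gen arf B) \<and>
      HP A arp arf K \<and> JEP A arp arf K \<and> closed_under_chains A arp arf K \<longrightarrow>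
      (\<exists>N :: ('m \<times> nat, 'p, 'f, 'a) struct.
          a_structure A arp arf N \<and> eq_upto_iso A arp arf K (age A arp arf N)))"
proof (intro conjI impI)
  assume "K \<noteq> {} \<and> countable_upto_iso A arp arf K \<and> (\<forall>B\<in>K. a_structure A arp arf B \<and> fin_gen arf B)"
  then show "(\<exists>N :: ('m \<times> nat, 'p, 'f, 'a) struct.
      a_structure A arp arf N \<and> eq_upto_iso A arp arf K (age A arp arf N))
    \<longleftrightarrow> HP A arp arf K \<and> JEP A arp arf K"
    using HP_if_age JEP_if_age age_if_countable_HP_JEP by blast
next
  assume "K \<noteq> {} \<and> (\<forall>B\<in>K. a_structure A arp arf B \<and> fin_gen arf B) \<and>
    HP A arp arf K \<and> JEP A arp arf K \<and> closed_under_chains A arp arf K"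
  then show "\<exists>N :: ('m \<times> nat, 'p, 'f, 'a) struct.
      a_structure A arp arf N \<and> eq_upto_iso A arp arf K (age A arp arf N)"
    using age_if_HP_JEP_chain_closed by blast
qed

end
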